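(* Let $C\subset V$ be an open cone containing no lines, with basepoint $b\in C$. The set of horofunctions of the reverse Funk geometry on $C$ is $\{r_{C,x}: x\in\partial C\setminus\{0\}\}$, and every one of these horofunctions is a Busemann point of the reverse Funk geometry. Moreover, if $D$ is a cross section of $C$, a sequence in $D$ converges in the reverse Funk sense to $r_{C,x}$ (with $x\in\partial C\setminus\{0\}$) if and only if it converges in the usual topology of $V$ to a positive multiple of $x$.
   Context: $V$ is a finite-dimensional real vector space. An open cone is a nonempty open convex set $T\subset V$ with $\lambda T\subseteq T$ for all $\lambda>0$ and $0\notin T$; $\partial T$ is its boundary in $V$. Write $x\le_T y$ iff $y-x\in\overline T$. For $y\in V$, $x\in T$: $M_T(y/x):=\inf\{\lambda>0:y\le_T\lambda x\}$, Funk function $F_T(y,x):=\log M_T(y/x)$, reverse Funk function $RF_T(x,y):=F_T(y,x)$. For $p\in\partial C\setminus\{0\}$, $r_{C,p}(x):=RF_C(x,p)-RF_C(b,p)$ for $x\in C$. A sequence $(x_n)$ in $C$ converges in the reverse Funk sense to $g:C\to\mathbb R$ if $RF_C(\cdot,x_n)-RF_C(b,x_n)\to g$ pointwise on $C$. A horofunction of the reverse Funk geometry is such a limit not of the form $RF_C(\cdot,p)-RF_C(b,p)$, $p\in C$. An almost-geodesic for $RF_C$ is a sequence $(x_l)$ in $C$ with, for some $\epsilon>0$, $\sum_{i=1}^l RF_C(x_{i-1},x_i)\le RF_C(x_0,x_l)+\epsilon$ for all $l\ge1$; a Busemann point is a reverse-Funk-sense limit of an almost-geodesic not of the form $RF_C(\cdot,p)-RF_C(b,p)$,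 $p\in C$. A cross section of $C$ is a set $D=\{x\in C:\psi(x)=1\}$ where $\psi$ is a linear functional on $V$ that is strictly positive on $\overline C\setminus\{0\}$. *)

theory Defs
  imports "HOL-Analysis.Analysis"
begin

text \<open>V is modelled by an arbitrary finite-dimensional real space 'a :: euclidean_space.\<close>

definition open_cone :: "'a::euclidean_space set \<Rightarrow> bool" where
  "open_cone T \<longleftrightarrow> T \<noteq> {} \<and> open T \<and> convex T \<and>
     (\<forall>c::real. c > 0 \<longrightarrow> (\<lambda>x. c *\<^sub>R x) ` T \<subseteq> T) \<and> 0 \<notin> T"

definition contains_no_lines :: "'a::euclidean_space set \<Rightarrow> bool" where
  "contains_no_lines T \<longleftrightarrow> \<not> (\<exists>x d. d \<noteq> 0 \<and> (\<forall>t::real. x + t *\<^sub>R d \<in> T))"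

definition cone_le :: "'a::euclidean_space set \<Rightarrow> 'a \<Rightarrow> 'a \<Rightarrow> bool" where
  "cone_le T x y \<longleftrightarrow> y - x \<in> closure T"

definition Mfun :: "'a::euclidean_space set \<Rightarrow> 'a \<Rightarrow> 'a \<Rightarrow> real" where
  "Mfun T y x = Inf {c::real. c > 0 \<and> cone_le T y (c *\<^sub>R x)}"

definition Funk :: "'a::euclidean_space set \<Rightarrow> 'a \<Rightarrow> 'a \<Rightarrow> real" where
  "Funk T y x = ln (Mfun T y x)"

definition RFunk :: "'a::euclidean_space set \<Rightarrow> 'a \<Rightarrow> 'a \<Rightarrow> real" where
  "RFunk T x y = Funk T y x"

definition rfun :: "'a::euclidean_space set \<Rightarrow> 'a \<Rightarrow> 'a \<Rightarrow> 'a \<Rightarrow> real" where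
  "rfun C b p x = RFunk C x p - RFunk C b p"

definition RF_converges :: "'a::euclidean_space set \<Rightarrow> 'a \<Rightarrow> (nat \<Rightarrow> 'a) \<Rightarrow> ('a \<Rightarrow> real) \<Rightarrow> bool" where
  "RF_converges C b xs g \<longleftrightarrow>
     (\<forall>y\<in>C. (\<lambda>n. RFunk C y (xs n) - RFunk C b (xs n)) \<longlonglongrightarrow> g y)"

definition not_internal :: "'a::euclidean_space set \<Rightarrow> 'a \<Rightarrow> ('a \<Rightarrow> real) \<Rightarrow> bool" where
  "not_internal C b g \<longleftrightarrow> \<not> (\<exists>p\<in>C. \<forall>y\<in>C. g y = RFunk C y p - RFunk C b p)"

definition RF_horofunction :: "'a::euclidean_space set \<Rightarrow> 'a \<Rightarrow> ('a \<Rightarrow> real) \<Rightarrow> bool" where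
  "RF_horofunction C b g \<longleftrightarrow>
     (\<exists>xs. (\<forall>n. xs n \<in> C) \<and> RF_converges C b xs g) \<and> not_internal C b g"

definition RF_almost_geodesic :: "'a::euclidean_space set \<Rightarrow> (nat \<Rightarrow> 'a) \<Rightarrow> bool" where
  "RF_almost_geodesic C xs \<longleftrightarrow> (\<forall>n. xs n \<in> C) \<and>
     (\<exists>\<epsilon>>0. \<forall>l\<ge>1. (\<Sum>i=1..l. RFunk C (xs (i-1)) (xs i)) \<le> RFunk C (xs 0) (xs l) + \<epsilon>)"

definition RF_Busemann :: "'a::euclidean_space set \<Rightarrow> 'a \<Rightarrow> ('a \<Rightarrow> real) \<Rightarrow> bool" where
  "RF_Busemann C b g \<longleftrightarrow>
     (\<exists>xs. RF_almost_geodesic C xs \<and> RF_converges C b xs g) \<and> not_internal C b g"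

definition cross_section :: "'a::euclidean_space set \<Rightarrow> 'a set \<Rightarrow> bool" where
  "cross_section C D \<longleftrightarrow> (\<exists>\<psi>::'a \<Rightarrow> real. linear \<psi> \<and>
     (\<forall>x\<in>closure C - {0}. \<psi> x > 0) \<and> D = {x\<in>C. \<psi> x = 1})"

end

theory Submission
  imports Defs
begin

(* For x in C the gauge p \<mapsto> M_C(p/x) is sublinear and Lipschitz, so on the nonzero points
   of the closed cone RF_C(y,.) - RF_C(b,.) is continuous and invariant under positive scaling.
   Hence the reverse Funk limit of a sequence is r_{C,z} for every limit z of a normalised
   subsequence, and because the closed cone is pointed, r_{C,z} determines the ray of z:
   M_C(z/.) \<le> M_C(w/.) on C forces z \<le>_C w. A boundary point p gives a horofunction (and not
   an internal function), being the limit of p + b/(n+1), a sequence decreasing in the cone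
   order and therefore an almost-geodesic. On a cross section the scale of a limit point is
   fixed, so uniqueness of the ray turns into convergence. *)

lemma LIMSEQ_if_subseqs_have_LIMSEQ_subseq:
  fixes X :: "nat \<Rightarrow> 'a::metric_space"
  assumes "\<And>r :: nat \<Rightarrow> nat. strict_mono r \<Longrightarrow>
    \<exists>s :: nat \<Rightarrow> nat. strict_mono s \<and> (X \<circ> r \<circ> s) \<longlonglongrightarrow> L"
  shows "X \<longlonglongrightarrow> L"
proof (rule ccontr)
  assume "\<not> X \<longlonglongrightarrow> L"
  then obtain e where "e > 0" and "\<forall>N. \<exists>n\<ge>N. \<not> dist (X n) L < e"
    unfolding lim_sequentially by auto
  then have "infinite {n. \<not> dist (X n) L < e}"
    unfolding infinite_nat_iff_unbounded_le by auto
  then obtain r :: "nat \<Rightarrow> nat" where r: "strict_mono r" and far: "\<And>n. \<not> dist (X (r n)) L < e"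
    using infinite_enumerate by blast
  obtain s where "strict_mono s" and "(X \<circ> r \<circ> s) \<longlonglongrightarrow> L"
    using assms[OF r] by blast
  then obtain N where "dist (X (r (s N))) L < e"
    using \<open>e > 0\<close> unfolding lim_sequentially by fastforce
  with far show False by blast
qed

locale open_cone_set =
  fixes C :: "'a::euclidean_space set"
  assumes open_cone: "open_cone C"
begin

lemma C_open: "open C" and C_convex: "convex C"
  and C_nonempty: "C \<noteq> {}" and zero_notin_C: "0 \<notin> C"
  using open_cone unfolding open_cone_def by auto

lemma scaleR_mem: "x \<in> C \<Longrightarrow> c > 0 \<Longrightarrow> c *\<^sub>R x \<in> C"
  using open_cone unfolding open_cone_def by blast

lemma add_closure_mem:
  assumes x: "x \<in> C" and k: "k \<in> closure C"
  shows "x + k \<in> C"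
proof (cases "k = x")
  case True
  then show ?thesis using scaleR_mem[OF x, of 2] by (simp add: scaleR_2)
next
  case False
  have "open_segment x k \<subseteq> C"
    using in_interior_closure_convex_segment[OF C_convex _ k] x C_open interior_open by auto
  then have "midpoint x k \<in> C" using False midpoint_in_open_segment by blast
  then show ?thesis using scaleR_mem[of "midpoint x k" 2] by (simp add: midpoint_def)
qed

lemma zero_in_closure: "0 \<in> closure C"
proof -
  obtain x where x: "x \<in> C" using C_nonempty by blast
  define f where "f n = inverse (real (Suc n)) *\<^sub>R x" for n
  have "f \<longlonglongrightarrow> 0 *\<^sub>R x"
    unfolding f_def by (intro tendsto_scaleR LIMSEQ_inverse_real_of_nat tendsto_const)
  moreover have "\<forall>n. f n \<in> C" unfolding f_def by (intro allI scaleR_mem x) simp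
  ultimately show ?thesis unfolding closure_sequential by auto
qed

lemma convex_cone_closure: "convex_cone (closure C)"
  unfolding convex_cone_def conic_def
proof (intro conjI allI impI)
  fix x and c :: real
  assume x: "x \<in> closure C" and "0 \<le> c"
  show "c *\<^sub>R x \<in> closure C"
  proof (cases "c = 0")
    case False
    have "c *\<^sub>R x \<in> (*\<^sub>R) c ` closure C" using x by blast
    also have "\<dots> = closure ((*\<^sub>R) c ` C)" by (rule closure_scaleR)
    also have "\<dots> \<subseteq> closure C"
      using scaleR_mem \<open>0 \<le> c\<close> False by (intro closure_mono) auto
    finally show ?thesis .
  qed (simp add: zero_in_closure)
qed (use C_nonempty C_convex in auto)

lemmas closure_cone_add = convex_cone_add[OF convex_cone_closure]
   and closure_cone_scaleR = convex_cone_scaleR[OF convex_cone_closure]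

lemma inward_perturbation:
  assumes b: "b \<in> C" and p: "p \<in> closure C"
  shows "p + inverse (real (Suc n)) *\<^sub>R b \<in> C"
    and "(\<lambda>n. p + inverse (real (Suc n)) *\<^sub>R b) \<longlonglongrightarrow> p"
proof -
  show "p + inverse (real (Suc n)) *\<^sub>R b \<in> C"
    using add_closure_mem[OF scaleR_mem[OF b] p] by (simp add: add.commute)
  have "(\<lambda>n. p + inverse (real (Suc n)) *\<^sub>R b) \<longlonglongrightarrow> p + 0 *\<^sub>R b"
    by (intro tendsto_intros LIMSEQ_inverse_real_of_nat)
  then show "(\<lambda>n. p + inverse (real (Suc n)) *\<^sub>R b) \<longlonglongrightarrow> p" by simp
qed

lemma frontier_iff: "p \<in> frontier C \<longleftrightarrow> p \<in> closure C \<and> p \<notin> C"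
  using C_open by (simp add: frontier_def interior_open)

lemma normalized_subseq_tendsto:
  fixes xs :: "nat \<Rightarrow> 'a"
  assumes xs: "\<forall>n. xs n \<in> C"
  obtains r z where "strict_mono r" "z \<in> closure C" "norm z = 1"
    "(\<lambda>n. xs (r n) /\<^sub>R norm (xs (r n))) \<longlonglongrightarrow> z"
proof -
  have "xs n \<noteq> 0" for n using xs zero_notin_C by metis
  then have "xs n /\<^sub>R norm (xs n) \<in> C" "norm (xs n /\<^sub>R norm (xs n)) = 1" for n
    using scaleR_mem[of "xs n" "inverse (norm (xs n))"] xs by simp_all
  then have "\<forall>n. xs n /\<^sub>R norm (xs n) \<in> closure C \<inter> sphere 0 1"
    using closure_subset by auto
  with compact_imp_seq_compact[OF closed_Int_compact[OF closed_closure[of C] compact_sphere[of 0 1]]]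
  obtain z and r :: "nat \<Rightarrow> nat" where "z \<in> closure C \<inter> sphere 0 1" "strict_mono r"
      "((\<lambda>n. xs n /\<^sub>R norm (xs n)) \<circ> r) \<longlonglongrightarrow> z"
    by (rule seq_compactE)
  then show ?thesis by (intro that[of r z]) (auto simp: o_def)
qed

lemma Mfun_eq_Inf: "Mfun C p x = Inf {c. c > 0 \<and> c *\<^sub>R x - p \<in> closure C}"
  unfolding Mfun_def cone_le_def by simp

lemma large_multiple_minus_mem:
  assumes x: "x \<in> C" and r: "r > 0" "ball x r \<subseteq> C" and c: "c > norm p / r"
  shows "c *\<^sub>R x - p \<in> C"
proof -
  have cpos: "c > 0" using c r by (smt (verit) divide_nonneg_pos norm_ge_zero)
  then have "dist x (x - p /\<^sub>R c) < r" using c r by (simp add: dist_norm field_simps)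
  then have "x - p /\<^sub>R c \<in> C" using r(2) by auto
  then have "c *\<^sub>R (x - p /\<^sub>R c) \<in> C" using scaleR_mem cpos by blast
  then show ?thesis using cpos by (simp add: scaleR_diff_right)
qed

lemma Mfun_bdd_below: "bdd_below {c. c > 0 \<and> c *\<^sub>R x - p \<in> closure C}"
  by (rule bdd_belowI[of _ 0]) auto

lemma Mfun_set_nonempty:
  assumes x: "x \<in> C"
  shows "{c. c > 0 \<and> c *\<^sub>R x - p \<in> closure C} \<noteq> {}"
proof -
  obtain r where r: "r > 0" "ball x r \<subseteq> C" using x C_open open_contains_ball by blast
  have "norm p / r + 1 > 0" using r by (simp add: add_nonneg_pos)
  with large_multiple_minus_mem[OF x r, of p "norm p / r + 1"] closure_subset show ?thesis by auto
qed

lemma Mfun_nonneg: "x \<in> C \<Longrightarrow> Mfun C p x \<ge> 0"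
  unfolding Mfun_eq_Inf by (rule cInf_greatest[OF Mfun_set_nonempty]) auto

lemma Mfun_le: "c > 0 \<Longrightarrow> c *\<^sub>R x - p \<in> closure C \<Longrightarrow> Mfun C p x \<le> c"
  unfolding Mfun_eq_Inf by (rule cInf_lower[OF _ Mfun_bdd_below]) auto

lemma Mfun_less_imp_mem:
  assumes x: "x \<in> C" and c: "Mfun C p x < c"
  shows "c *\<^sub>R x - p \<in> closure C"
proof -
  obtain s where s: "s > 0" "s *\<^sub>R x - p \<in> closure C" "s < c"
    using c cInf_less_iff[OF Mfun_set_nonempty[OF x] Mfun_bdd_below] unfolding Mfun_eq_Inf by auto
  have "(c - s) *\<^sub>R x \<in> closure C"
    using closure_cone_scaleR[of "c - s" x] x closure_subset s(3) by auto
  from closure_cone_add[OF s(2) this] show ?thesis by (simp add: algebra_simps)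
qed

lemma Mfun_le_norm_div:
  assumes x: "x \<in> C" and r: "r > 0" "ball x r \<subseteq> C"
  shows "Mfun C p x \<le> norm p / r"
proof (rule dense_ge)
  fix c assume c: "norm p / r < c"
  then have "c > 0" using r by (smt (verit) divide_nonneg_pos norm_ge_zero)
  then show "Mfun C p x \<le> c"
    using Mfun_le large_multiple_minus_mem[OF x r c] closure_subset by blast
qed

lemma Mfun_add_le:
  assumes x: "x \<in> C"
  shows "Mfun C (p + q) x \<le> Mfun C p x + Mfun C q x"
proof (rule dense_ge)
  fix e assume e: "Mfun C p x + Mfun C q x < e"
  define d where "d = (e - Mfun C p x - Mfun C q x) / 2"
  have "d > 0" using e unfolding d_def by simp
  then have "(Mfun C p x + d) *\<^sub>R x - p \<in> closure C" "(Mfun C q x + d) *\<^sub>R x - q \<in> closure C"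
    using Mfun_less_imp_mem[OF x] by auto
  then have "((Mfun C p x + d) *\<^sub>R x - p) + ((Mfun C q x + d) *\<^sub>R x - q) \<in> closure C"
    by (rule closure_cone_add)
  moreover have "(Mfun C p x + d) + (Mfun C q x + d) = e" unfolding d_def by simp
  ultimately have "e *\<^sub>R x - (p + q) \<in> closure C"
    by (metis (no_types, lifting) add_diff_add scaleR_add_left)
  moreover have "e > 0" using e Mfun_nonneg[OF x, of p] Mfun_nonneg[OF x, of q] by linarith
  ultimately show "Mfun C (p + q) x \<le> e" using Mfun_le by blast
qed

lemma Mfun_lipschitz:
  assumes x: "x \<in> C" and r: "r > 0" "ball x r \<subseteq> C"
  shows "(1 / r)-lipschitz_on UNIV (\<lambda>p. Mfun C p x)"
proof (rule lipschitz_onI)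
  fix p q :: 'a
  have "Mfun C p x \<le> Mfun C q x + Mfun C (p - q) x"
    "Mfun C q x \<le> Mfun C p x + Mfun C (q - p) x"
    using Mfun_add_le[OF x, of q "p - q"] Mfun_add_le[OF x, of p "q - p"] by simp_all
  moreover have "Mfun C (p - q) x \<le> norm (p - q) / r" "Mfun C (q - p) x \<le> norm (p - q) / r"
    using Mfun_le_norm_div[OF x r, of "p - q"] Mfun_le_norm_div[OF x r, of "q - p"]
    by (simp_all add: norm_minus_commute)
  ultimately show "dist (Mfun C p x) (Mfun C q x) \<le> 1 / r * dist p q"
    by (simp add: dist_real_def dist_norm abs_le_iff)
qed (use r in simp)

lemma Mfun_tendsto:
  assumes x: "x \<in> C" and zs: "zs \<longlonglongrightarrow> z"
  shows "(\<lambda>n. Mfun C (zs n) x) \<longlonglongrightarrow> Mfun C z x"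
proof -
  obtain r where "r > 0" "ball x r \<subseteq> C" using x C_open open_contains_ball by blast
  then have "continuous_on UNIV (\<lambda>p. Mfun C p x)"
    using Mfun_lipschitz[OF x] lipschitz_on_continuous_on by blast
  then have "isCont (\<lambda>p. Mfun C p x) z"
    by (simp add: continuous_on_eq_continuous_at)
  then show ?thesis by (rule isCont_tendsto_compose[OF _ zs])
qed

lemma Mfun_scaleR_le:
  assumes x: "x \<in> C" and t: "t > 0"
  shows "Mfun C (t *\<^sub>R p) x \<le> t * Mfun C p x"
proof (rule dense_ge)
  fix e assume e: "t * Mfun C p x < e"
  then have "(e / t) *\<^sub>R x - p \<in> closure C"
    using t by (intro Mfun_less_imp_mem[OF x]) (simp add: field_simps)
  then have "t *\<^sub>R ((e / t) *\<^sub>R x - p) \<in> closure C"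
    using closure_cone_scaleR[of t "(e / t) *\<^sub>R x - p"] t by simp
  then have "e *\<^sub>R x - t *\<^sub>R p \<in> closure C"
    using t by (simp add: scaleR_diff_right)
  moreover have "e > 0" using e Mfun_nonneg[OF x, of p] t by (smt (verit) mult_nonneg_nonneg)
  ultimately show "Mfun C (t *\<^sub>R p) x \<le> e" using Mfun_le by blast
qed

lemma Mfun_scaleR:
  assumes x: "x \<in> C" and t: "t > 0"
  shows "Mfun C (t *\<^sub>R p) x = t * Mfun C p x"
proof -
  have "Mfun C p x \<le> inverse t * Mfun C (t *\<^sub>R p) x"
    using Mfun_scaleR_le[OF x, of "inverse t" "t *\<^sub>R p"] t by simp
  then show ?thesis using Mfun_scaleR_le[OF x t, of p] t by (simp add: field_simps)
qed

lemma closure_diff_if_Mfun_le: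
  assumes w: "w \<in> closure C" and le: "\<forall>y\<in>C. Mfun C z y \<le> Mfun C w y"
  shows "w - z \<in> closure C"
proof -
  obtain b where b: "b \<in> C" using C_nonempty by blast
  define t where "t n = inverse (real (Suc n))" for n
  have t: "t n > 0" for n unfolding t_def by simp
  define y where "y n = w + t n *\<^sub>R b" for n
  have y: "y n \<in> C" for n
    using inward_perturbation(1)[OF b w] unfolding y_def t_def .
  have "(1 + t n) *\<^sub>R y n - z \<in> closure C" for n
  proof -
    have "Mfun C w (y n) \<le> 1"
      by (rule Mfun_le[of 1]) (use scaleR_mem[OF b t] closure_subset in \<open>auto simp: y_def\<close>)
    moreover have "Mfun C z (y n) \<le> Mfun C w (y n)" using le y by blast
    ultimately show ?thesis
      using t[of n] by (intro Mfun_less_imp_mem[OF y]) linarith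
  qed
  moreover have "(\<lambda>n. (1 + t n) *\<^sub>R y n - z) \<longlonglongrightarrow> (1 + 0) *\<^sub>R (w + 0 *\<^sub>R b) - z"
    unfolding y_def t_def by (intro tendsto_intros LIMSEQ_inverse_real_of_nat)
  ultimately have "(1 + 0) *\<^sub>R (w + 0 *\<^sub>R b) - z \<in> closure C"
    by (rule closed_sequentially[OF closed_closure])
  then show ?thesis by simp
qed

end

locale line_free_cone = open_cone_set +
  assumes no_lines: "contains_no_lines C"
begin

lemma closure_pointed:
  assumes k: "k \<in> closure C" and minus_k: "- k \<in> closure C"
  shows "k = 0"
proof (rule ccontr)
  assume "k \<noteq> 0"
  obtain x where x: "x \<in> C" using C_nonempty by blast
  have "x + t *\<^sub>R k \<in> C" for t
  proof (cases "t \<ge> 0")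
    case True
    show ?thesis using add_closure_mem[OF x closure_cone_scaleR[OF True k]] .
  next
    case False
    then have "(- t) *\<^sub>R (- k) \<in> closure C" using closure_cone_scaleR[OF _ minus_k, of "- t"] by simp
    then show ?thesis using add_closure_mem[OF x] by simp
  qed
  with \<open>k \<noteq> 0\<close> show False using no_lines unfolding contains_no_lines_def by blast
qed

lemma Mfun_pos:
  assumes x: "x \<in> C" and p: "p \<in> closure C" "p \<noteq> 0"
  shows "Mfun C p x > 0"
proof (rule ccontr)
  assume "\<not> Mfun C p x > 0"
  then have "Mfun C p x = 0" using Mfun_nonneg[OF x, of p] by linarith
  then have "Mfun C p x < inverse (real (Suc n))" for n by simp
  then have "inverse (real (Suc n)) *\<^sub>R x - p \<in> closure C" for n
    by (rule Mfun_less_imp_mem[OF x])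
  moreover have "(\<lambda>n. inverse (real (Suc n)) *\<^sub>R x - p) \<longlonglongrightarrow> 0 *\<^sub>R x - p"
    by (intro tendsto_intros LIMSEQ_inverse_real_of_nat)
  ultimately have "0 *\<^sub>R x - p \<in> closure C"
    by (rule closed_sequentially[OF closed_closure])
  then show False using closure_pointed[OF p(1)] p(2) by simp
qed

lemma Mfun_eq_imp_eq:
  assumes "z \<in> closure C" "w \<in> closure C" and "\<forall>y\<in>C. Mfun C z y = Mfun C w y"
  shows "z = w"
proof -
  have "w - z \<in> closure C" "z - w \<in> closure C"
    using closure_diff_if_Mfun_le assms by auto
  then show ?thesis using closure_pointed[of "z - w"] by simp
qed

lemma RFunk_diff_tendsto:
  assumes b: "b \<in> C" and y: "y \<in> C" and z: "z \<in> closure C" "z \<noteq> 0" and zs: "zs \<longlonglongrightarrow> z"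
  shows "(\<lambda>n. RFunk C y (zs n) - RFunk C b (zs n)) \<longlonglongrightarrow> rfun C b z y"
  unfolding RFunk_def Funk_def rfun_def
  by (intro tendsto_diff tendsto_ln Mfun_tendsto[OF y zs] Mfun_tendsto[OF b zs])
     (use Mfun_pos[OF y z] Mfun_pos[OF b z] in auto)

lemma RFunk_diff_scaleR:
  assumes b: "b \<in> C" and y: "y \<in> C" and p: "p \<in> closure C" "p \<noteq> 0" and t: "t > 0"
  shows "RFunk C y (t *\<^sub>R p) - RFunk C b (t *\<^sub>R p) = RFunk C y p - RFunk C b p"
  using Mfun_pos[OF y p] Mfun_pos[OF b p] t
  unfolding RFunk_def Funk_def by (simp add: Mfun_scaleR[OF y t] Mfun_scaleR[OF b t] ln_mult)

lemma rfun_scaleR: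
  assumes "b \<in> C" "y \<in> C" "p \<in> closure C" "p \<noteq> 0" "t > 0"
  shows "rfun C b (t *\<^sub>R p) y = rfun C b p y"
  using RFunk_diff_scaleR[OF assms] unfolding rfun_def .

lemma rfun_eq_imp_scaleR:
  assumes b: "b \<in> C" and z: "z \<in> closure C" "z \<noteq> 0" and p: "p \<in> closure C" "p \<noteq> 0"
    and eq: "\<forall>y\<in>C. rfun C b z y = rfun C b p y"
  obtains c where "c > 0" "z = c *\<^sub>R p"
proof -
  define c where "c = Mfun C z b / Mfun C p b"
  have c: "c > 0" unfolding c_def using Mfun_pos[OF b z] Mfun_pos[OF b p] by simp
  have "Mfun C z y = Mfun C (c *\<^sub>R p) y" if y: "y \<in> C" for y
  proof -
    have "ln (Mfun C z y) = ln (Mfun C p y) + ln c"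
      using eq y Mfun_pos[OF b z] Mfun_pos[OF b p]
      unfolding rfun_def RFunk_def Funk_def c_def by (auto simp: ln_div)
    also have "\<dots> = ln (c * Mfun C p y)" using c Mfun_pos[OF y p] by (simp add: ln_mult)
    finally have "Mfun C z y = c * Mfun C p y"
      using c Mfun_pos[OF y p] Mfun_pos[OF y z] by simp
    then show ?thesis using Mfun_scaleR[OF y c] by simp
  qed
  then have "z = c *\<^sub>R p"
    using Mfun_eq_imp_eq[OF z(1) closure_cone_scaleR[OF _ p(1)]] c by auto
  with c show ?thesis by (rule that)
qed

lemma RFunk_nonpos:
  assumes x: "x \<in> C" and y: "y \<in> C" and le: "x - y \<in> closure C"
  shows "RFunk C x y \<le> 0"
proof -
  have "0 < Mfun C y x" using Mfun_pos[OF x] y closure_subset zero_notin_C by blast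
  moreover have "Mfun C y x \<le> 1" using Mfun_le[of 1] le by simp
  ultimately show ?thesis unfolding RFunk_def Funk_def by simp
qed

lemma RF_converges_of_tendsto:
  assumes "b \<in> C" "z \<in> closure C" "z \<noteq> 0" "xs \<longlonglongrightarrow> z"
  shows "RF_converges C b xs (rfun C b z)"
  unfolding RF_converges_def using RFunk_diff_tendsto[OF assms(1) _ assms(2-4)] by blast

lemma RF_limit_eq_rfun:
  assumes b: "b \<in> C" and xs: "\<forall>n. xs n \<in> C" and cv: "RF_converges C b xs g"
    and r: "strict_mono r" and z: "z \<in> closure C" "z \<noteq> 0"
    and lim: "(\<lambda>n. xs (r n) /\<^sub>R norm (xs (r n))) \<longlonglongrightarrow> z" and y: "y \<in> C"
  shows "g y = rfun C b z y"
proof -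
  have "(\<lambda>n. RFunk C y (xs n) - RFunk C b (xs n)) \<longlonglongrightarrow> g y"
    using cv y unfolding RF_converges_def by blast
  from LIMSEQ_subseq_LIMSEQ[OF this r]
  have "(\<lambda>n. RFunk C y (xs (r n)) - RFunk C b (xs (r n))) \<longlonglongrightarrow> g y" by (simp add: o_def)
  moreover have "(\<lambda>n. RFunk C y (xs (r n)) - RFunk C b (xs (r n))) \<longlonglongrightarrow> rfun C b z y"
  proof -
    have "xs (r n) \<in> closure C" for n using xs closure_subset by blast
    moreover have "xs (r n) \<noteq> 0" for n using xs zero_notin_C by metis
    ultimately have "RFunk C y (xs (r n) /\<^sub>R norm (xs (r n)))
        - RFunk C b (xs (r n) /\<^sub>R norm (xs (r n)))
        = RFunk C y (xs (r n)) - RFunk C b (xs (r n))" for n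
      using RFunk_diff_scaleR[OF b y] by simp
    with RFunk_diff_tendsto[OF b y z lim] show ?thesis by simp
  qed
  ultimately show ?thesis by (rule LIMSEQ_unique)
qed

lemma rfun_not_internal:
  assumes b: "b \<in> C" and p: "p \<in> frontier C" "p \<noteq> 0"
  shows "not_internal C b (rfun C b p)"
  unfolding not_internal_def
proof
  assume "\<exists>q\<in>C. \<forall>y\<in>C. rfun C b p y = RFunk C y q - RFunk C b q"
  then obtain q where q: "q \<in> C" and eq: "\<forall>y\<in>C. rfun C b p y = RFunk C y q - RFunk C b q"
    by blast
  have pK: "p \<in> closure C" and "p \<notin> C" using p frontier_iff by auto
  have qK: "q \<in> closure C" "q \<noteq> 0" using q closure_subset zero_notin_C by auto
  define y where "y n = p + inverse (real (Suc n)) *\<^sub>R b" for n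
  have y: "y n \<in> C" for n unfolding y_def by (rule inward_perturbation(1)[OF b pK])
  define A where "A = ln (Mfun C q b) - ln (Mfun C p b)"
  have L: "exp A + 1 > 0" using exp_gt_zero[of A] by linarith
  \<comment> \<open>Along \<open>y n \<longlonglongrightarrow> p\<close> the gauge of \<open>p\<close> stays below 1, hence that of \<open>q\<close> below
      \<open>exp A\<close>; in the limit \<open>q \<le>\<^sub>C (exp A + 1) p\<close>, which puts \<open>p\<close> into the open cone.\<close>
  have "(exp A + 1) *\<^sub>R y n - q \<in> closure C" for n
  proof (rule Mfun_less_imp_mem[OF y])
    have "Mfun C p (y n) \<le> 1"
      by (rule Mfun_le[of 1])
        (use scaleR_mem[OF b, of "inverse (real (Suc n))"] closure_subset in \<open>auto simp: y_def\<close>)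
    then have "ln (Mfun C p (y n)) \<le> 0" using Mfun_pos[OF y pK p(2)] by simp
    moreover have "ln (Mfun C q (y n)) = ln (Mfun C p (y n)) + A"
      using eq y[of n] unfolding rfun_def RFunk_def Funk_def A_def by auto
    ultimately have "ln (Mfun C q (y n)) \<le> A" by simp
    then have "Mfun C q (y n) \<le> exp A"
      using Mfun_pos[OF y qK] by (metis exp_le_cancel_iff exp_ln)
    then show "Mfun C q (y n) < exp A + 1" by simp
  qed
  moreover have "y \<longlonglongrightarrow> p" unfolding y_def by (rule inward_perturbation(2)[OF b pK])
  then have "(\<lambda>n. (exp A + 1) *\<^sub>R y n - q) \<longlonglongrightarrow> (exp A + 1) *\<^sub>R p - q"
    by (intro tendsto_intros)
  ultimately have "(exp A + 1) *\<^sub>R p - q \<in> closure C"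
    by (rule closed_sequentially[OF closed_closure])
  from add_closure_mem[OF q this] have "(exp A + 1) *\<^sub>R p \<in> C" by simp
  then have "inverse (exp A + 1) *\<^sub>R ((exp A + 1) *\<^sub>R p) \<in> C"
    by (rule scaleR_mem) (use L in simp)
  with \<open>p \<notin> C\<close> L show False by simp
qed

lemma RF_Busemann_rfun:
  assumes b: "b \<in> C" and p: "p \<in> frontier C" "p \<noteq> 0"
  shows "RF_Busemann C b (rfun C b p)"
proof -
  have pK: "p \<in> closure C" using p frontier_iff by blast
  define xs where "xs n = p + inverse (real (Suc n)) *\<^sub>R b" for n
  have xs: "xs n \<in> C" for n unfolding xs_def by (rule inward_perturbation(1)[OF b pK])
  have lim: "xs \<longlonglongrightarrow> p" unfolding xs_def by (rule inward_perturbation(2)[OF b pK])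
  have step: "RFunk C (xs j) (xs (Suc j)) \<le> 0" for j
  proof (rule RFunk_nonpos[OF xs xs])
    have "inverse (real (Suc (Suc j))) \<le> inverse (real (Suc j))"
      by (rule le_imp_inverse_le) simp_all
    moreover have "b \<in> closure C" using b closure_subset by blast
    ultimately have "(inverse (real (Suc j)) - inverse (real (Suc (Suc j)))) *\<^sub>R b \<in> closure C"
      by (intro closure_cone_scaleR) simp_all
    then show "xs j - xs (Suc j) \<in> closure C" by (simp add: xs_def algebra_simps)
  qed
  have "(\<lambda>l. RFunk C (xs 0) (xs l)) \<longlonglongrightarrow> ln (Mfun C p (xs 0))"
    unfolding RFunk_def Funk_def
    by (intro tendsto_ln Mfun_tendsto[OF xs lim]) (use Mfun_pos[OF xs pK p(2), of 0] in auto)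
  then have "Bseq (\<lambda>l. RFunk C (xs 0) (xs l))" by (intro convergent_imp_Bseq convergentI)
  then obtain B where "B > 0" and B: "\<forall>l. norm (RFunk C (xs 0) (xs l)) \<le> B"
    by (rule BseqE)
  have "RF_almost_geodesic C xs"
    unfolding RF_almost_geodesic_def
  proof (intro conjI allI impI exI[of _ B] xs \<open>B > 0\<close>)
    fix l :: nat
    have "(\<Sum>i = 1..l. RFunk C (xs (i - 1)) (xs i)) \<le> 0"
    proof (rule sum_nonpos)
      fix i assume "i \<in> {1..l}"
      then have "Suc (i - 1) = i" by simp
      then show "RFunk C (xs (i - 1)) (xs i) \<le> 0" using step[of "i - 1"] by simp
    qed
    moreover have "- RFunk C (xs 0) (xs l) \<le> B" using B[rule_format, of l] by simp
    ultimately show "(\<Sum>i = 1..l. RFunk C (xs (i - 1)) (xs i)) \<le> RFunk C (xs 0) (xs l) + B"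
      by linarith
  qed
  then show ?thesis
    unfolding RF_Busemann_def
    using RF_converges_of_tendsto[OF b pK p(2) lim] rfun_not_internal[OF b p] by blast
qed

lemma RF_horofunction_cong:
  "\<forall>y\<in>C. g y = h y \<Longrightarrow> RF_horofunction C b g \<longleftrightarrow> RF_horofunction C b h"
  by (simp add: RF_horofunction_def RF_converges_def not_internal_def)

lemma RF_horofunction_iff:
  assumes b: "b \<in> C"
  shows "RF_horofunction C b g \<longleftrightarrow> (\<exists>p\<in>frontier C - {0}. \<forall>y\<in>C. g y = rfun C b p y)"
proof
  assume "RF_horofunction C b g"
  then obtain xs where xs: "\<forall>n. xs n \<in> C" and cv: "RF_converges C b xs g"
    and ni: "not_internal C b g"
    unfolding RF_horofunction_def by blast
  obtain r z where r: "strict_mono r" and z: "z \<in> closure C" "norm z = 1"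
    and lim: "(\<lambda>n. xs (r n) /\<^sub>R norm (xs (r n))) \<longlonglongrightarrow> z"
    using normalized_subseq_tendsto[OF xs] by blast
  have "z \<noteq> 0" using z(2) by auto
  have gz: "\<forall>y\<in>C. g y = rfun C b z y"
    using RF_limit_eq_rfun[OF b xs cv r z(1) \<open>z \<noteq> 0\<close> lim] by blast
  moreover have "z \<notin> C" using ni gz unfolding not_internal_def rfun_def by auto
  ultimately show "\<exists>p\<in>frontier C - {0}. \<forall>y\<in>C. g y = rfun C b p y"
    using z(1) \<open>z \<noteq> 0\<close> frontier_iff by blast
next
  assume "\<exists>p\<in>frontier C - {0}. \<forall>y\<in>C. g y = rfun C b p y"
  then obtain p where p: "p \<in> frontier C" "p \<noteq> 0" and gp: "\<forall>y\<in>C. g y = rfun C b p y"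
    by blast
  have "RF_horofunction C b (rfun C b p)"
    using RF_Busemann_rfun[OF b p]
    unfolding RF_Busemann_def RF_horofunction_def RF_almost_geodesic_def by blast
  then show "RF_horofunction C b g" using RF_horofunction_cong[OF gp] by blast
qed

lemma RF_converges_rfun_imp_tendsto:
  assumes b: "b \<in> C" and \<psi>: "linear \<psi>" and xs: "\<forall>n. xs n \<in> C" and \<psi>_xs: "\<And>n. \<psi> (xs n) = 1"
    and p: "p \<in> closure C" "p \<noteq> 0" and \<psi>_p: "\<psi> p > 0"
    and cv: "RF_converges C b xs (rfun C b p)"
  shows "xs \<longlonglongrightarrow> inverse (\<psi> p) *\<^sub>R p"
proof (rule LIMSEQ_if_subseqs_have_LIMSEQ_subseq)
  fix r :: "nat \<Rightarrow> nat"
  assume r: "strict_mono r"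
  obtain s z where s: "strict_mono s" and z: "z \<in> closure C" "norm z = 1"
    and lim: "(\<lambda>n. xs (r (s n)) /\<^sub>R norm (xs (r (s n)))) \<longlonglongrightarrow> z"
    using normalized_subseq_tendsto[of "xs \<circ> r"] xs by auto
  define w where "w n = xs (r (s n)) /\<^sub>R norm (xs (r (s n)))" for n
  have "z \<noteq> 0" using z(2) by auto
  have "(\<lambda>n. xs ((r \<circ> s) n) /\<^sub>R norm (xs ((r \<circ> s) n))) \<longlonglongrightarrow> z"
    using lim by (simp add: o_def)
  from RF_limit_eq_rfun[OF b xs cv strict_mono_o[OF r s] z(1) \<open>z \<noteq> 0\<close> this]
  have "\<forall>y\<in>C. rfun C b z y = rfun C b p y" by simp
  then obtain c where c: "c > 0" "z = c *\<^sub>R p"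
    using rfun_eq_imp_scaleR[OF b z(1) \<open>z \<noteq> 0\<close> p] by blast
  have "\<psi> z = c * \<psi> p" using c(2) linear_scale[OF \<psi>] by simp
  then have "\<psi> z \<noteq> 0" using c(1) \<psi>_p by simp
  have "(\<lambda>n. \<psi> (w n)) \<longlonglongrightarrow> \<psi> z"
    using lim unfolding w_def
    by (intro bounded_linear.tendsto[OF linear_conv_bounded_linear[THEN iffD1, OF \<psi>]])
  then have "(\<lambda>n. inverse (\<psi> (w n)) *\<^sub>R w n) \<longlonglongrightarrow> inverse (\<psi> z) *\<^sub>R z"
    using lim \<open>\<psi> z \<noteq> 0\<close> unfolding w_def by (intro tendsto_scaleR tendsto_inverse)
  also have "(\<lambda>n. inverse (\<psi> (w n)) *\<^sub>R w n) = xs \<circ> r \<circ> s"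
  proof
    fix n
    have "xs (r (s n)) \<noteq> 0" using xs zero_notin_C by metis
    moreover have "\<psi> (w n) = inverse (norm (xs (r (s n))))"
      unfolding w_def using \<psi>_xs linear_scale[OF \<psi>] by simp
    ultimately show "inverse (\<psi> (w n)) *\<^sub>R w n = (xs \<circ> r \<circ> s) n"
      unfolding w_def by simp
  qed
  also have "inverse (\<psi> z) *\<^sub>R z = inverse (\<psi> p) *\<^sub>R p"
    using \<open>\<psi> z = c * \<psi> p\<close> c by simp
  finally show "\<exists>s. strict_mono s \<and> (xs \<circ> r \<circ> s) \<longlonglongrightarrow> inverse (\<psi> p) *\<^sub>R p"
    using s by blast
qed

lemma cross_section_RF_converges_iff:
  assumes b: "b \<in> C" and D: "cross_section C D" and xsD: "\<forall>n. xs n \<in> D"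
    and p: "p \<in> frontier C" "p \<noteq> 0"
  shows "RF_converges C b xs (rfun C b p) \<longleftrightarrow> (\<exists>\<mu>>0. xs \<longlonglongrightarrow> \<mu> *\<^sub>R p)"
proof
  obtain \<psi> :: "'a \<Rightarrow> real" where \<psi>: "linear \<psi>" and pos: "\<forall>x\<in>closure C - {0}. \<psi> x > 0"
    and D_eq: "D = {x\<in>C. \<psi> x = 1}"
    using D unfolding cross_section_def by blast
  have xs: "\<forall>n. xs n \<in> C" and \<psi>_xs: "\<And>n. \<psi> (xs n) = 1" using xsD D_eq by auto
  have pK: "p \<in> closure C" using p frontier_iff by blast
  then have \<psi>_p: "\<psi> p > 0" using pos p(2) by blast
  assume "RF_converges C b xs (rfun C b p)"
  with RF_converges_rfun_imp_tendsto[OF b \<psi> xs \<psi>_xs pK p(2) \<psi>_p]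
  show "\<exists>\<mu>>0. xs \<longlonglongrightarrow> \<mu> *\<^sub>R p"
    using \<psi>_p by (intro exI[of _ "inverse (\<psi> p)"]) auto
next
  assume "\<exists>\<mu>>0. xs \<longlonglongrightarrow> \<mu> *\<^sub>R p"
  then obtain \<mu> where \<mu>: "\<mu> > 0" "xs \<longlonglongrightarrow> \<mu> *\<^sub>R p" by blast
  have pK: "p \<in> closure C" using p frontier_iff by blast
  then have "\<mu> *\<^sub>R p \<in> closure C" using closure_cone_scaleR \<mu>(1) by simp
  moreover have "\<mu> *\<^sub>R p \<noteq> 0" using \<mu>(1) p(2) by simp
  ultimately have "RF_converges C b xs (rfun C b (\<mu> *\<^sub>R p))"
    using RF_converges_of_tendsto[OF b _ _ \<mu>(2)] by blast
  then show "RF_converges C b xs (rfun C b p)"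
    using rfun_scaleR[OF b _ pK p(2) \<mu>(1)] unfolding RF_converges_def by simp
qed

end

theorem mainTheorem4:
  fixes C :: "'a::euclidean_space set" and b :: 'a
  assumes "open_cone C" and "contains_no_lines C" and "b \<in> C"
  shows "(\<forall>g. RF_horofunction C b g \<longleftrightarrow>
            (\<exists>p\<in>frontier C - {0}. \<forall>y\<in>C. g y = rfun C b p y))
       \<and> (\<forall>p\<in>frontier C - {0}. RF_Busemann C b (rfun C b p))
       \<and> (\<forall>D xs p. cross_section C D \<longrightarrow> (\<forall>n. xs n \<in> D) \<longrightarrow> p \<in> frontier C - {0} \<longrightarrow>
            (RF_converges C b xs (rfun C b p) \<longleftrightarrow> (\<exists>\<mu>>0. xs \<longlonglongrightarrow> \<mu> *\<^sub>R p)))"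
proof -
  interpret line_free_cone C
    using assms(1,2) by unfold_locales
  show ?thesis
    using RF_horofunction_iff[OF assms(3)] RF_Busemann_rfun[OF assms(3)]
      cross_section_RF_converges_iff[OF assms(3)] by blast
qed

end
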